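(* Let $\mathcal{M} = \{0,1\}^n$ with $n$ even. Consider the following construction. $\mathsf{Gen}(w)$: let $a=[w]_1^{n/2}$ and $b=[w]_{n/2+1}^n$ (the first and second halves of $w$), viewed as elements of $\mathbb{F}_{2^{n/2}}$; select a uniformly random $i\in \mathbb{F}_{2^{n/2}}$; set $\sigma = [ia+b]_1^{v}$ and $R=[ia+b]_{v+1}^{n/2}$; output the key $R$ and the public string $P=(i,\sigma)$. $\mathsf{Rep}(w, P'=(i',\sigma'))$: with $a,b$ the halves of $w$ as before, if $\sigma'=[i'a+b]_1^{v}$ output $R'=[i'a+b]_{v+1}^{n/2}$, else output $\bot$. Setting $v = n/2 - \ell$, this construction is an $(m,\ell,0,\varepsilon)$-fuzzy extractor with post-application robustness $\delta$, for any $m,\ell,\varepsilon,\delta$ satisfying $\ell \leq m - n/2 -\log\frac{1}{\delta}$, as long as $m\geq n/2 + 2\log\frac{1}{\varepsilon}$.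
   Context: Notation: $[x]_i^j$ denotes the substring $x_i x_{i+1}\ldots x_j$; addition in $\mathbb{F}_{2^{n/2}}$ corresponds to bitwise XOR. An $(m,\ell,t,\varepsilon)$-fuzzy extractor is a pair $(\mathsf{Gen},\mathsf{Rep})$ such that $\mathsf{Gen}(w)$ outputs $R\in\{0,1\}^\ell$ and helper $P$; $\mathsf{Rep}(w',P)=R$ whenever the Hamming distance between $w$ and $w'$ is at most $t$; and for every $W$ with min-entropy ${\mathbf{H}}_\infty(W)\ge m$, the statistical distance between $(R,P)$ and $U_\ell\times P$ is at most $\varepsilon$. Post-application robustness $\delta$: for every distribution $W$ with min-entropy at least $m$ (here $w'=w$) and every (computationally unbounded) adversary $\mathcal{A}$, the probability that $\mathcal{A}$, given both $R$ and $P$ from $\mathsf{Gen}(w)$, outputs $\tilde P\ne P$ with $\mathsf{Rep}(w,\tilde P)\neq\bot$ is at most $\delta$. Logarithms are base 2. *)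

theory Defs
  imports "HOL-Probability.Probability"
begin

definition min_entropy :: "'a pmf \<Rightarrow> real" where
  "min_entropy W = - log 2 (SUP w. pmf W w)"

definition stat_dist :: "'a pmf \<Rightarrow> 'a pmf \<Rightarrow> real" where
  "stat_dist p q = (1/2) * (\<Sum>\<^sub>\<infinity> x. \<bar>pmf p x - pmf q x\<bar>)"

definition hamming_dist :: "bool list \<Rightarrow> bool list \<Rightarrow> nat" where
  "hamming_dist xs ys = card {i. i < length xs \<and> xs ! i \<noteq> ys ! i}"

definition uniform_bits :: "nat \<Rightarrow> bool list pmf" where
  "uniform_bits l = pmf_of_set {xs. length xs = l}"

text \<open>(m, l, t, eps)-fuzzy extractor on M = {0,1}^n. Gen is randomized (a pmf over
  pairs (R, P)); Rep returns None for the failure symbol bot.\<close>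
definition fuzzy_extractor ::
  "nat \<Rightarrow> real \<Rightarrow> nat \<Rightarrow> nat \<Rightarrow> real \<Rightarrow>
   (bool list \<Rightarrow> (bool list \<times> 'p) pmf) \<Rightarrow> (bool list \<Rightarrow> 'p \<Rightarrow> bool list option) \<Rightarrow> bool" where
  "fuzzy_extractor n m l t eps Gen Rep \<longleftrightarrow>
     (\<forall>w. length w = n \<longrightarrow>
        (\<forall>R P. (R, P) \<in> set_pmf (Gen w) \<longrightarrow>
           length R = l \<and>
           (\<forall>w'. length w' = n \<and> hamming_dist w w' \<le> t \<longrightarrow> Rep w' P = Some R))) \<and>
     (\<forall>W :: bool list pmf. set_pmf W \<subseteq> {w. length w = n} \<and> min_entropy W \<ge> m \<longrightarrow>
        stat_dist (bind_pmf W Gen)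
                  (pair_pmf (uniform_bits l) (map_pmf snd (bind_pmf W Gen))) \<le> eps)"

definition post_app_robust ::
  "nat \<Rightarrow> real \<Rightarrow> real \<Rightarrow>
   (bool list \<Rightarrow> (bool list \<times> 'p) pmf) \<Rightarrow> (bool list \<Rightarrow> 'p \<Rightarrow> bool list option) \<Rightarrow> bool" where
  "post_app_robust n m delta Gen Rep \<longleftrightarrow>
     (\<forall>(W :: bool list pmf) (A :: bool list \<Rightarrow> 'p \<Rightarrow> 'p pmf).
        set_pmf W \<subseteq> {w. length w = n} \<and> min_entropy W \<ge> m \<longrightarrow>
        measure_pmf.prob
          (bind_pmf W (\<lambda>w. bind_pmf (Gen w) (\<lambda>(R, P).
             map_pmf (\<lambda>P'. (w, P, P')) (A R P))))
          {(w, P, P'). P' \<noteq> P \<and> Rep w P' \<noteq> None} \<le> delta)"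

text \<open>enc is the bit representation of F_{2^k} (k = n/2); a and b are the halves of w
  viewed as field elements; [x]_1^v = take v, [x]_{v+1}^k = drop v.\<close>
definition gen_ex :: "('f::{field,finite} \<Rightarrow> bool list) \<Rightarrow> nat \<Rightarrow> nat \<Rightarrow>
    bool list \<Rightarrow> (bool list \<times> ('f \<times> bool list)) pmf" where
  "gen_ex enc k v w =
     (let a = inv enc (take k w); b = inv enc (drop k w)
      in map_pmf (\<lambda>i. let y = enc (i * a + b) in (drop v y, (i, take v y)))
                 (pmf_of_set (UNIV :: 'f set)))"

definition rep_ex :: "('f::{field,finite} \<Rightarrow> bool list) \<Rightarrow> nat \<Rightarrow> nat \<Rightarrow>
    bool list \<Rightarrow> ('f \<times> bool list) \<Rightarrow> bool list option" where
  "rep_ex enc k v w P' =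
     (let a = inv enc (take k w); b = inv enc (drop k w);
          y = enc (fst P' * a + b)
      in if snd P' = take v y then Some (drop v y) else None)"

end

theory Submission
  imports Defs
begin

text \<open>The seeded map (a, b) \<mapsto> i a + b is a universal hash family on F \<times> F, so by the
  leftover hash lemma the pair (i, i a + b) is within 1/2 sqrt (|F| 2^-m) of uniform; cutting
  i a + b into tag and key is a bijection, hence the key is close to uniform given the public string
  (the distance at most doubles when the uniform tag is replaced by the real one).
  For robustness the adversary sees only i and y = i a + b. A forgery (i', s) with i' \<noteq> i has to
  predict the first v bits of i' a + b, and as (i a + b, i' a + b) determines (a, b), at most 2^l
  inputs w are consistent with y and s, each of probability at most 2^-m. Summing over the |F|
  values of y gives the bound 2^(n/2 + l - m).\<close>

section \<open>Statistical distance\<close>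

lemma stat_dist_eq_sum:
  assumes "finite S" "set_pmf p \<subseteq> S" "set_pmf q \<subseteq> S"
  shows "stat_dist p q = 1/2 * (\<Sum>x\<in>S. \<bar>pmf p x - pmf q x\<bar>)"
proof -
  have "pmf p x = 0" "pmf q x = 0" if "x \<notin> S" for x
    using that assms(2,3) by (auto simp: pmf_eq_0_set_pmf)
  then have "(\<Sum>\<^sub>\<infinity> x. \<bar>pmf p x - pmf q x\<bar>) = (\<Sum>\<^sub>\<infinity> x\<in>S. \<bar>pmf p x - pmf q x\<bar>)"
    by (intro infsum_cong_neutral) auto
  with assms(1) show ?thesis
    unfolding stat_dist_def by simp
qed

lemma stat_dist_commute: "stat_dist p q = stat_dist q p"
  unfolding stat_dist_def by (simp add: abs_minus_commute)

lemma stat_dist_triangle: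
  assumes "finite (set_pmf p)" "finite (set_pmf q)" "finite (set_pmf r)"
  shows "stat_dist p r \<le> stat_dist p q + stat_dist q r"
proof -
  let ?S = "set_pmf p \<union> set_pmf q \<union> set_pmf r"
  have "finite ?S" using assms by auto
  then have sd: "stat_dist x y = 1/2 * (\<Sum>z\<in>?S. \<bar>pmf x z - pmf y z\<bar>)"
    if "x \<in> {p, q, r}" "y \<in> {p, q, r}" for x y
    using that by (intro stat_dist_eq_sum) auto
  have "(\<Sum>x\<in>?S. \<bar>pmf p x - pmf r x\<bar>)
        \<le> (\<Sum>x\<in>?S. \<bar>pmf p x - pmf q x\<bar>) + (\<Sum>x\<in>?S. \<bar>pmf q x - pmf r x\<bar>)"
    unfolding sum.distrib[symmetric] by (intro sum_mono) linarith
  then show ?thesis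
    using sd[of p q] sd[of q r] sd[of p r] by simp
qed

lemma stat_dist_map_le:
  assumes "finite (set_pmf p)" "finite (set_pmf q)"
  shows "stat_dist (map_pmf f p) (map_pmf f q) \<le> stat_dist p q"
proof -
  let ?S = "set_pmf p \<union> set_pmf q"
  have fin: "finite ?S" using assms by auto
  have pmf_map_eq: "pmf (map_pmf f r) y = (\<Sum>x\<in>{x\<in>?S. f x = y}. pmf r x)"
    if "set_pmf r \<subseteq> ?S" for r y
  proof -
    have "pmf (map_pmf f r) y = measure_pmf.prob r {x\<in>?S. f x = y}"
      using that by (auto simp: pmf_map intro!: measure_eq_AE AE_pmfI)
    also have "\<dots> = (\<Sum>x\<in>{x\<in>?S. f x = y}. pmf r x)"
      using fin by (simp add: measure_measure_pmf_finite)
    finally show ?thesis .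
  qed
  have "stat_dist (map_pmf f p) (map_pmf f q)
        = 1/2 * (\<Sum>y\<in>f ` ?S. \<bar>pmf (map_pmf f p) y - pmf (map_pmf f q) y\<bar>)"
    using fin by (intro stat_dist_eq_sum) auto
  also have "\<dots> = 1/2 * (\<Sum>y\<in>f ` ?S. \<bar>\<Sum>x\<in>{x\<in>?S. f x = y}. pmf p x - pmf q x\<bar>)"
    by (simp add: pmf_map_eq sum_subtractf)
  also have "\<dots> \<le> 1/2 * (\<Sum>y\<in>f ` ?S. \<Sum>x\<in>{x\<in>?S. f x = y}. \<bar>pmf p x - pmf q x\<bar>)"
    by (intro mult_left_mono sum_mono sum_abs) auto
  also have "\<dots> = 1/2 * (\<Sum>x\<in>?S. \<bar>pmf p x - pmf q x\<bar>)"
    using fin by (subst sum.group) auto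
  also have "\<dots> = stat_dist p q"
    using fin by (intro stat_dist_eq_sum[symmetric]) auto
  finally show ?thesis .
qed

lemma stat_dist_pair_left_le:
  assumes "finite (set_pmf a)" "finite (set_pmf p)" "finite (set_pmf q)"
  shows "stat_dist (pair_pmf a p) (pair_pmf a q) \<le> stat_dist p q"
proof -
  let ?S = "set_pmf p \<union> set_pmf q"
  have fin: "finite ?S" using assms by auto
  have "stat_dist (pair_pmf a p) (pair_pmf a q)
        = 1/2 * (\<Sum>z\<in>set_pmf a \<times> ?S. \<bar>pmf (pair_pmf a p) z - pmf (pair_pmf a q) z\<bar>)"
    using assms fin by (intro stat_dist_eq_sum) auto
  also have "\<dots> = 1/2 * (\<Sum>x\<in>set_pmf a. \<Sum>y\<in>?S. pmf a x * \<bar>pmf p y - pmf q y\<bar>)"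
    by (auto simp: sum.cartesian_product pmf_pair abs_mult right_diff_distrib[symmetric]
        intro!: sum.cong)
  also have "\<dots> = 1/2 * (\<Sum>y\<in>?S. \<bar>pmf p y - pmf q y\<bar>)"
    using assms(1) by (simp add: sum_product[symmetric] sum_pmf_eq_1)
  also have "\<dots> = stat_dist p q"
    using fin by (intro stat_dist_eq_sum[symmetric]) auto
  finally show ?thesis by simp
qed

lemma stat_dist_pair_marginal_le:
  assumes "finite (set_pmf p)" "finite (set_pmf a)" "finite (set_pmf b)"
  shows "stat_dist p (pair_pmf a (map_pmf snd p)) \<le> 2 * stat_dist p (pair_pmf a b)"
proof -
  have fin: "finite (set_pmf (pair_pmf a b))" "finite (set_pmf (pair_pmf a (map_pmf snd p)))"
    using assms by auto
  have "stat_dist p (pair_pmf a (map_pmf snd p))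
        \<le> stat_dist p (pair_pmf a b) + stat_dist (pair_pmf a b) (pair_pmf a (map_pmf snd p))"
    using assms fin by (intro stat_dist_triangle)
  also have "stat_dist (pair_pmf a b) (pair_pmf a (map_pmf snd p)) \<le> stat_dist b (map_pmf snd p)"
    using assms by (intro stat_dist_pair_left_le) auto
  also have "\<dots> = stat_dist (map_pmf snd (pair_pmf a b)) (map_pmf snd p)"
    by (simp add: map_snd_pair_pmf)
  also have "\<dots> \<le> stat_dist p (pair_pmf a b)"
    using assms fin by (subst stat_dist_commute) (intro stat_dist_map_le)
  finally show ?thesis by simp
qed

lemma stat_dist_uniform_le_collision:
  fixes D :: "'a::finite pmf"
  shows "stat_dist D (pmf_of_set UNIV)
         \<le> 1/2 * sqrt (real CARD('a) * (\<Sum>z\<in>UNIV. pmf D z ^ 2) - 1)"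
proof -
  define N where "N = real CARD('a)"
  have N: "N > 0" unfolding N_def by simp
  define f where "f z = pmf D z - 1 / N" for z
  have sd: "stat_dist D (pmf_of_set UNIV) = 1/2 * (\<Sum>z\<in>UNIV. \<bar>f z\<bar>)"
    by (subst stat_dist_eq_sum[of UNIV]) (auto simp: f_def N_def pmf_of_set)
  have sum_D: "(\<Sum>z\<in>UNIV. pmf D z) = 1" by (simp add: sum_pmf_eq_1)
  have "(\<Sum>z\<in>UNIV. f z ^ 2) = (\<Sum>z\<in>UNIV. pmf D z ^ 2) - 2 / N * (\<Sum>z\<in>UNIV. pmf D z) + N / N^2"
    by (simp add: f_def power2_diff sum.distrib sum_subtractf sum_distrib_left N_def
        power_divide)
  also have "\<dots> = (\<Sum>z\<in>UNIV. pmf D z ^ 2) - 1 / N"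
    using N by (simp add: sum_D power2_eq_square field_simps)
  finally have sq: "N * (\<Sum>z\<in>UNIV. f z ^ 2) = N * (\<Sum>z\<in>UNIV. pmf D z ^ 2) - 1"
    using N by (simp add: field_simps)
  have "(\<Sum>z\<in>UNIV. \<bar>f z\<bar>) \<le> L2_set f UNIV * L2_set (\<lambda>_::'a. 1) UNIV"
    using L2_set_mult_ineq[of f "\<lambda>_. 1" UNIV] by simp
  also have "\<dots> = sqrt (N * (\<Sum>z\<in>UNIV. f z ^ 2))"
    by (simp add: L2_set_def N_def real_sqrt_mult)
  finally have "(\<Sum>z\<in>UNIV. \<bar>f z\<bar>) \<le> sqrt (N * (\<Sum>z\<in>UNIV. pmf D z ^ 2) - 1)"
    by (simp only: sq)
  then show ?thesis
    unfolding sd N_def by simp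
qed

lemma measure_bind_pmf_finite:
  assumes "finite S" "set_pmf M \<subseteq> S"
  shows "measure_pmf.prob (bind_pmf M f) E = (\<Sum>x\<in>S. pmf M x * measure_pmf.prob (f x) E)"
proof -
  have "emeasure (measure_pmf (bind_pmf M f)) E = (\<integral>\<^sup>+x. emeasure (f x) E \<partial>M)" by simp
  also have "\<dots> = (\<Sum>x\<in>S. emeasure (measure_pmf (f x)) E * ennreal (pmf M x))"
    using assms by (intro nn_integral_measure_pmf_support) auto
  also have "\<dots> = ennreal (\<Sum>x\<in>S. pmf M x * measure_pmf.prob (f x) E)"
    by (simp add: measure_pmf.emeasure_eq_measure mult.commute flip: sum_ennreal ennreal_mult)
  finally show ?thesis
    by (simp add: measure_pmf.emeasure_eq_measure sum_nonneg)
qed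

lemma sum_weighted_prob_le:
  fixes \<mu> :: "'b pmf" and c :: "'a \<Rightarrow> real" and E :: "'a \<Rightarrow> 'b set"
  assumes "finite S" and "\<And>w. c w \<ge> 0"
    and "\<And>x. (\<Sum>w\<in>S. c w * indicator (E w) x) \<le> C"
  shows "(\<Sum>w\<in>S. c w * measure_pmf.prob \<mu> (E w)) \<le> C"
proof -
  have int: "integrable (measure_pmf \<mu>) (\<lambda>x. c w * indicator (E w) x :: real)" for w
    by (rule measure_pmf.integrable_const_bound[where B="\<bar>c w\<bar>"]) (auto simp: indicator_def)
  have "(\<Sum>w\<in>S. c w * measure_pmf.prob \<mu> (E w))
        = measure_pmf.expectation \<mu> (\<lambda>x. \<Sum>w\<in>S. c w * indicator (E w) x)"
    using int by (simp add: Bochner_Integration.integral_sum)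
  also have "\<dots> \<le> measure_pmf.expectation \<mu> (\<lambda>x. C)"
    using int assms(3) by (intro integral_mono) auto
  also have "\<dots> = C" by simp
  finally show ?thesis .
qed

lemma pair_pmf_of_set:
  assumes "finite A" "A \<noteq> {}" "finite B" "B \<noteq> {}"
  shows "pair_pmf (pmf_of_set A) (pmf_of_set B) = pmf_of_set (A \<times> B)"
proof (rule pmf_eqI)
  fix z :: "'a \<times> 'b"
  show "pmf (pair_pmf (pmf_of_set A) (pmf_of_set B)) z = pmf (pmf_of_set (A \<times> B)) z"
    using assms by (cases z) (simp add: pmf_pair pmf_of_set card_cartesian_product indicator_def)
qed

lemma pmf_le_of_min_entropy:
  assumes "min_entropy W \<ge> m"
  shows "pmf W w \<le> 2 powr (-m)"
proof -
  let ?s = "SUP w. pmf W w"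
  have bdd: "bdd_above (range (pmf W))" by (intro bdd_aboveI[of _ 1]) (auto simp: pmf_le_1)
  then have le: "pmf W x \<le> ?s" for x by (intro cSUP_upper) auto
  obtain x where "x \<in> set_pmf W" using set_pmf_not_empty[of W] by blast
  then have "?s > 0" using le[of x] pmf_positive[of x W] by linarith
  moreover have "log 2 ?s \<le> -m" using assms unfolding min_entropy_def by linarith
  ultimately have "?s \<le> 2 powr (-m)" by (simp add: log_le_iff)
  then show ?thesis using le[of w] by linarith
qed

lemma pmf_map_le_of_min_entropy:
  assumes "min_entropy W \<ge> m" "inj_on f (set_pmf W)"
  shows "pmf (map_pmf f W) z \<le> 2 powr (-m)"
proof (cases "z \<in> f ` set_pmf W")
  case True
  then obtain w where "w \<in> set_pmf W" "z = f w" by auto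
  with assms show ?thesis by (simp add: pmf_map_inj pmf_le_of_min_entropy)
next
  case False
  then have "pmf (map_pmf f W) z = 0" by (simp add: pmf_eq_0_set_pmf)
  then show ?thesis by simp
qed

section \<open>The leftover hash lemma for the affine hash family\<close>

definition affine_hash :: "'f::field \<Rightarrow> 'f \<times> 'f \<Rightarrow> 'f" where
  "affine_hash i x = i * fst x + snd x"

definition affine_hash_pmf :: "'f::{field,finite} \<times> 'f \<Rightarrow> ('f \<times> 'f) pmf" where
  "affine_hash_pmf x = map_pmf (\<lambda>i. (i, affine_hash i x)) (pmf_of_set UNIV)"

lemma affine_hash_eq_imp_eq:
  fixes x x' :: "'f::field \<times> 'f"
  assumes "i \<noteq> i'" "affine_hash i x = affine_hash i x'" "affine_hash i' x = affine_hash i' x'"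
  shows "x = x'"
proof -
  obtain a b a' b' where x: "x = (a, b)" "x' = (a', b')" by fastforce
  have "(i - i') * (a - a') = (i * a + b - (i * a' + b')) - (i' * a + b - (i' * a' + b'))"
    by (simp add: algebra_simps)
  also have "\<dots> = 0" using assms(2,3) by (simp add: affine_hash_def x)
  finally have "a = a'" using assms(1) by simp
  then show ?thesis using assms(2) by (simp add: affine_hash_def x)
qed

lemma pmf_affine_hash_pmf:
  fixes x :: "'f::{field,finite} \<times> 'f"
  shows "pmf (affine_hash_pmf x) z = (if snd z = affine_hash (fst z) x then 1 / real CARD('f) else 0)"
proof -
  let ?h = "\<lambda>i. (i, affine_hash i x)"
  have inj: "inj ?h" by (auto intro: injI)
  then have "affine_hash_pmf x = pmf_of_set (range ?h)"
    unfolding affine_hash_pmf_def by (intro map_pmf_of_set_inj) auto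
  moreover have "card (range ?h) = CARD('f)" using inj by (simp add: card_image)
  moreover have "z \<in> range ?h \<longleftrightarrow> snd z = affine_hash (fst z) x"
    by (cases z) auto
  ultimately show ?thesis by (simp add: pmf_of_set)
qed

lemma pmf_bind_affine_hash_pmf:
  fixes X :: "('f::{field,finite} \<times> 'f) pmf"
  shows "pmf (bind_pmf X affine_hash_pmf) z
         = (\<Sum>a\<in>UNIV. pmf X (a, snd z - fst z * a)) / real CARD('f)"
proof -
  have "pmf (bind_pmf X affine_hash_pmf) z = (\<Sum>x\<in>UNIV. pmf (affine_hash_pmf x) z * pmf X x)"
    unfolding pmf_bind by (rule integral_measure_pmf_real) auto
  also have "\<dots> = (\<Sum>a\<in>UNIV. \<Sum>b\<in>UNIV. pmf (affine_hash_pmf (a, b)) z * pmf X (a, b))"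
    using sum.cartesian_product[of "\<lambda>a b. pmf (affine_hash_pmf (a, b)) z * pmf X (a, b)" UNIV UNIV]
    by simp
  also have "\<dots> = (\<Sum>a\<in>UNIV. \<Sum>b\<in>UNIV. if b = snd z - fst z * a then pmf X (a, b) / real CARD('f) else 0)"
    by (intro sum.cong) (auto simp: pmf_affine_hash_pmf affine_hash_def algebra_simps)
  also have "\<dots> = (\<Sum>a\<in>UNIV. pmf X (a, snd z - fst z * a)) / real CARD('f)"
    by (simp add: sum.delta' sum_divide_distrib)
  finally show ?thesis .
qed

lemma affine_collision_sum_same:
  fixes p :: "'f::{field,finite} \<times> 'f \<Rightarrow> real"
  shows "(\<Sum>z\<in>UNIV. p (a, snd z - fst z * a) ^ 2) = real CARD('f) * (\<Sum>b\<in>UNIV. p (a, b) ^ 2)"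
proof -
  have "(\<Sum>z\<in>UNIV. p (a, snd z - fst z * a) ^ 2) = (\<Sum>(i::'f, b)\<in>UNIV. p (a, b) ^ 2)"
    by (rule sum.reindex_bij_witness[where i="\<lambda>(i, b). (i, b + i * a)" and j="\<lambda>(i, y). (i, y - i * a)"])
      auto
  also have "\<dots> = real CARD('f) * (\<Sum>b\<in>UNIV. p (a, b) ^ 2)"
    using sum.cartesian_product[of "\<lambda>(i::'f) b. p (a, b) ^ 2" UNIV UNIV] by simp
  finally show ?thesis .
qed

text \<open>For a \<noteq> a', the map (i, y) \<mapsto> (y - i a, y - i a') is a bijection of F \<times> F, so the
  two preimages are independent.\<close>
lemma affine_collision_sum_distinct:
  fixes p :: "'f::{field,finite} \<times> 'f \<Rightarrow> real"
  assumes "a \<noteq> a'"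
  shows "(\<Sum>z\<in>UNIV. p (a, snd z - fst z * a) * p (a', snd z - fst z * a'))
         = (\<Sum>b\<in>UNIV. p (a, b)) * (\<Sum>b\<in>UNIV. p (a', b))"
proof -
  have d: "a - a' \<noteq> 0" using assms by simp
  have "(\<Sum>z\<in>UNIV. p (a, snd z - fst z * a) * p (a', snd z - fst z * a'))
        = (\<Sum>(b::'f, b')\<in>UNIV. p (a, b) * p (a', b'))"
  proof (rule sum.reindex_bij_witness[where j="\<lambda>(i, y). (y - i * a, y - i * a')"
        and i="\<lambda>(b, b'). ((b' - b) / (a - a'), b + (b' - b) / (a - a') * a)"])
    fix z :: "'f \<times> 'f"
    obtain i y where z: "z = (i, y)" by fastforce
    have "y - i * a' - (y - i * a) = i * (a - a')"
      by (simp add: algebra_simps)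
    with d have "(y - i * a' - (y - i * a)) / (a - a') = i" by simp
    then show "(case case z of (i, y) \<Rightarrow> (y - i * a, y - i * a') of
        (b, b') \<Rightarrow> ((b' - b) / (a - a'), b + (b' - b) / (a - a') * a)) = z"
      unfolding z case_prod_conv by simp
  next
    fix z :: "'f \<times> 'f"
    obtain b b' where z: "z = (b, b')" by fastforce
    have "b + (b' - b) / (a - a') * a - (b' - b) / (a - a') * a' = b + (b' - b) / (a - a') * (a - a')"
      by (simp only: right_diff_distrib add_diff_eq)
    also have "\<dots> = b'" using d by simp
    finally show "(case case z of (b, b') \<Rightarrow> ((b' - b) / (a - a'), b + (b' - b) / (a - a') * a) of
        (i, y) \<Rightarrow> (y - i * a, y - i * a')) = z"
      by (simp add: z)
  qed auto
  also have "\<dots> = (\<Sum>b\<in>UNIV. p (a, b)) * (\<Sum>b\<in>UNIV. p (a', b))"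
    using sum.cartesian_product[of "\<lambda>b b'. p (a, b) * p (a', b')" UNIV UNIV]
    by (simp add: sum_product)
  finally show ?thesis .
qed

text \<open>The left-hand side is |F|^2 times the collision probability of (i, i a + b). Expanding the
  square, coinciding first components a = a' contribute |F| \<Sum> p^2 \<le> |F| M and distinct ones
  behave like independent draws, contributing at most 1.\<close>
lemma sum_affine_preimage_sq_le:
  fixes X :: "('f::{field,finite} \<times> 'f) pmf"
  assumes "\<And>x. pmf X x \<le> M"
  shows "(\<Sum>z\<in>UNIV. (\<Sum>a\<in>UNIV. pmf X (a, snd z - fst z * a)) ^ 2) \<le> real CARD('f) * M + 1"
proof -
  define p where "p = pmf X"
  define P where "P a = (\<Sum>b\<in>UNIV. p (a, b))" for a
  define T where "T a a' = (\<Sum>z\<in>UNIV. p (a, snd z - fst z * a) * p (a', snd z - fst z * a'))" for a a'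
  have sum_P: "(\<Sum>a\<in>UNIV. P a) = 1"
    using sum.cartesian_product[of "\<lambda>a b. p (a, b)" UNIV UNIV]
    by (simp add: P_def p_def sum_pmf_eq_1)
  have sum_sq: "(\<Sum>a\<in>UNIV. \<Sum>b\<in>UNIV. p (a, b) ^ 2) \<le> M"
  proof -
    have "(\<Sum>a\<in>UNIV. \<Sum>b\<in>UNIV. p (a, b) ^ 2) = (\<Sum>x\<in>UNIV. p x * p x)"
      using sum.cartesian_product[of "\<lambda>a b. p (a, b) ^ 2" UNIV UNIV] by (simp add: power2_eq_square)
    also have "\<dots> \<le> (\<Sum>x\<in>UNIV. M * p x)"
      using assms by (intro sum_mono mult_right_mono) (auto simp: p_def)
    also have "\<dots> = M" by (simp add: p_def sum_pmf_eq_1 flip: sum_distrib_left)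
    finally show ?thesis .
  qed
  have "(\<Sum>z\<in>UNIV. (\<Sum>a\<in>UNIV. p (a, snd z - fst z * a)) ^ 2)
        = (\<Sum>z\<in>UNIV. \<Sum>a\<in>UNIV. \<Sum>a'\<in>UNIV. p (a, snd z - fst z * a) * p (a', snd z - fst z * a'))"
    by (simp only: power2_eq_square sum_product)
  also have "\<dots> = (\<Sum>a\<in>UNIV. \<Sum>a'\<in>UNIV. T a a')"
    unfolding T_def by (subst sum.swap) (intro sum.cong refl sum.swap)
  also have "\<dots> \<le> (\<Sum>a\<in>UNIV. \<Sum>a'\<in>UNIV.
                    (if a = a' then real CARD('f) * (\<Sum>b\<in>UNIV. p (a, b) ^ 2) else 0) + P a * P a')"
  proof (intro sum_mono)
    fix a a' :: 'f
    have "P a * P a' \<ge> 0" by (simp add: P_def p_def sum_nonneg)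
    then show "T a a' \<le> (if a = a' then real CARD('f) * (\<Sum>b\<in>UNIV. p (a, b) ^ 2) else 0) + P a * P a'"
      by (cases "a = a'")
        (simp_all add: T_def P_def affine_collision_sum_distinct
          affine_collision_sum_same[unfolded power2_eq_square] power2_eq_square)
  qed
  also have "\<dots> = real CARD('f) * (\<Sum>a\<in>UNIV. \<Sum>b\<in>UNIV. p (a, b) ^ 2) + (\<Sum>a\<in>UNIV. P a) ^ 2"
  proof -
    have "(\<Sum>a\<in>UNIV. \<Sum>a'\<in>UNIV. P a * P a') = (\<Sum>a\<in>UNIV. P a) ^ 2"
      by (simp only: power2_eq_square sum_product)
    then show ?thesis by (simp add: sum.distrib sum_distrib_left)
  qed
  also have "\<dots> \<le> real CARD('f) * M + 1"
    using sum_sq by (simp add: sum_P)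
  finally show ?thesis by (simp add: p_def)
qed

theorem leftover_hash_lemma_affine:
  fixes X :: "('f::{field,finite} \<times> 'f) pmf"
  assumes "\<And>x. pmf X x \<le> M"
  shows "stat_dist (bind_pmf X affine_hash_pmf) (pmf_of_set UNIV) \<le> 1/2 * sqrt (real CARD('f) * M)"
proof -
  define q where "q = real CARD('f)"
  have q: "q > 0" by (simp add: q_def)
  have card_sq: "real CARD('f \<times> 'f) = q ^ 2"
    by (simp add: q_def power2_eq_square)
  have "(\<Sum>z\<in>UNIV. pmf (bind_pmf X affine_hash_pmf) z ^ 2)
        = (\<Sum>z\<in>UNIV. (\<Sum>a\<in>UNIV. pmf X (a, snd z - fst z * a)) ^ 2) / q ^ 2"
    by (simp add: pmf_bind_affine_hash_pmf q_def power_divide flip: sum_divide_distrib)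
  also have "\<dots> \<le> (q * M + 1) / q ^ 2"
    using sum_affine_preimage_sq_le[OF assms] q by (intro divide_right_mono) (auto simp: q_def)
  finally have "real CARD('f \<times> 'f) * (\<Sum>z\<in>UNIV. pmf (bind_pmf X affine_hash_pmf) z ^ 2) - 1 \<le> q * M"
    using q unfolding card_sq by (simp add: field_simps)
  then show ?thesis
    using stat_dist_uniform_le_collision[of "bind_pmf X affine_hash_pmf"]
    by (simp add: q_def) (meson mult_left_mono real_sqrt_le_mono order_trans zero_le_divide_iff)
qed

lemma card_bool_lists: "card {xs :: bool list. length xs = k} = 2 ^ k"
  using card_lists_length_eq[of "UNIV :: bool set" k] by simp

lemma finite_bool_lists: "finite {xs :: bool list. length xs = k}"
  using finite_lists_length_eq[of "UNIV :: bool set" k] by simp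

lemma card_bool_lists_prefix_le: "card {xs :: bool list. length xs = k \<and> take j xs = s} \<le> 2 ^ (k - j)"
proof -
  let ?L = "{xs :: bool list. length xs = k \<and> take j xs = s}"
  have "inj_on (drop j) ?L"
    by (rule inj_onI) (metis (mono_tags, lifting) append_take_drop_id mem_Collect_eq)
  moreover have "drop j ` ?L \<subseteq> {t. length t = k - j}" by auto
  ultimately have "card ?L \<le> card {t :: bool list. length t = k - j}"
    by (intro card_inj_on_le finite_bool_lists)
  then show ?thesis by (simp add: card_bool_lists)
qed

lemma finite_set_pmf_bool_lists:
  "set_pmf W \<subseteq> {xs :: bool list. length xs = k} \<Longrightarrow> finite (set_pmf W)"
  using finite_bool_lists by (rule finite_subset[rotated])

lemma set_pmf_uniform_bits: "set_pmf (uniform_bits l) = {xs. length xs = l}"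
  unfolding uniform_bits_def
  by (intro set_pmf_of_set finite_bool_lists) (auto intro: exI[of _ "replicate l False"])

lemma hamming_dist_zero_imp_eq:
  assumes "length w = length w'" "hamming_dist w w' = 0"
  shows "w = w'"
proof -
  have "{i. i < length w \<and> w ! i \<noteq> w' ! i} = {}"
    using assms(2) by (simp add: hamming_dist_def)
  with assms(1) show ?thesis by (intro nth_equalityI) auto
qed

locale affine_extractor =
  fixes enc :: "'f::{field,finite} \<Rightarrow> bool list" and n l :: nat
  assumes even_n: "even n"
    and bij_enc: "bij_betw enc UNIV {xs. length xs = n div 2}"
    and l_le: "l \<le> n div 2"
begin

abbreviation "K \<equiv> n div 2"
abbreviation "V \<equiv> n div 2 - l"
abbreviation "Gen \<equiv> gen_ex enc K V"
abbreviation "Rep \<equiv> rep_ex enc K V"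

definition halves :: "bool list \<Rightarrow> 'f \<times> 'f" where
  "halves w = (inv enc (take K w), inv enc (drop K w))"

definition split_output :: "'f \<times> 'f \<Rightarrow> bool list \<times> 'f \<times> bool list" where
  "split_output z = (drop V (enc (snd z)), fst z, take V (enc (snd z)))"

lemma length_enc [simp]: "length (enc x) = K"
  using bij_betw_apply[OF bij_enc] by simp

lemma enc_inv_enc: "length xs = K \<Longrightarrow> enc (inv enc xs) = xs"
  using bij_betw_imp_surj_on[OF bij_enc] by (intro f_inv_into_f) auto

lemma enc_eq_iff [simp]: "enc x = enc y \<longleftrightarrow> x = y"
  using bij_betw_imp_inj_on[OF bij_enc] by (auto dest: injD)

lemma card_field: "CARD('f) = 2 ^ K"
  using bij_betw_same_card[OF bij_enc] by (simp add: card_bool_lists)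

lemma inj_on_halves: "inj_on halves {w. length w = n}"
proof (rule inj_onI)
  fix w w' assume len: "w \<in> {w. length w = n}" "w' \<in> {w. length w = n}"
    and eq: "halves w = halves w'"
  have "n - K = K" using even_n by auto
  have "take K w = enc (fst (halves w))" "take K w' = enc (fst (halves w'))"
    "drop K w = enc (snd (halves w))" "drop K w' = enc (snd (halves w'))"
    using len \<open>n - K = K\<close> by (simp_all add: halves_def enc_inv_enc)
  then have "take K w = take K w'" "drop K w = drop K w'"
    by (simp_all add: eq)
  then show "w = w'" by (metis append_take_drop_id)
qed

lemma gen_ex_eq: "Gen w = map_pmf split_output (affine_hash_pmf (halves w))"
  unfolding gen_ex_def affine_hash_pmf_def split_output_def halves_def affine_hash_def
  by (simp add: map_pmf_comp Let_def)

lemma rep_ex_eq_None_iff: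
  "Rep w P = None \<longleftrightarrow> snd P \<noteq> take V (enc (affine_hash (fst P) (halves w)))"
  unfolding rep_ex_def halves_def affine_hash_def by (simp add: Let_def)

lemma gen_ex_correct:
  assumes "(R, P) \<in> set_pmf (Gen w)"
  shows "length R = l" "Rep w P = Some R"
  using assms l_le unfolding gen_ex_def rep_ex_def by (auto simp: Let_def)

lemma split_output_uniform:
  "map_pmf split_output (pmf_of_set UNIV)
   = pair_pmf (uniform_bits l) (pmf_of_set (UNIV \<times> {s. length s = V}))"
proof -
  have "bij_betw split_output UNIV ({R. length R = l} \<times> UNIV \<times> {s. length s = V})"
  proof (rule bij_betw_byWitness[where f'="\<lambda>(R, i, s). (i, inv enc (s @ R))"])
    show "\<forall>z\<in>UNIV. (\<lambda>(R, i, s). (i, inv enc (s @ R))) (split_output z) = z"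
      by (auto simp: split_output_def bij_betw_inv_into_left[OF bij_enc])
    show "\<forall>z\<in>{R. length R = l} \<times> UNIV \<times> {s. length s = V}.
            split_output ((\<lambda>(R, i, s). (i, inv enc (s @ R))) z) = z"
      using l_le by (auto simp: split_output_def enc_inv_enc)
  qed (use l_le in \<open>auto simp: split_output_def\<close>)
  then have "map_pmf split_output (pmf_of_set UNIV)
             = pmf_of_set ({R. length R = l} \<times> UNIV \<times> {s. length s = V})"
    by (simp add: bij_betw_def map_pmf_of_set_inj)
  also have "\<dots> = pair_pmf (uniform_bits l) (pmf_of_set (UNIV \<times> {s. length s = V}))"
    unfolding uniform_bits_def
    by (rule pair_pmf_of_set[symmetric]) (auto simp: finite_bool_lists intro: exI[of _ "replicate _ False"])
  finally show ?thesis .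
qed

lemma extractor_stat_dist_le:
  assumes "set_pmf W \<subseteq> {w. length w = n}" and "min_entropy W \<ge> m"
  shows "stat_dist (bind_pmf W Gen) (pair_pmf (uniform_bits l) (map_pmf snd (bind_pmf W Gen)))
         \<le> sqrt (real CARD('f) * 2 powr (-m))"
proof -
  define D where "D = bind_pmf (map_pmf halves W) affine_hash_pmf"
  define B where "B = (pmf_of_set (UNIV \<times> {s :: bool list. length s = V}) :: ('f \<times> bool list) pmf)"
  have gen_W: "bind_pmf W Gen = map_pmf split_output D"
    unfolding D_def gen_ex_eq by (simp add: map_bind_pmf bind_map_pmf)
  have fin_B: "finite (set_pmf B)"
    unfolding B_def by (subst set_pmf_of_set) (auto simp: finite_bool_lists intro: exI[of _ "replicate _ False"])
  have "inj_on halves (set_pmf W)"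
    using inj_on_halves assms(1) by (rule inj_on_subset)
  then have "stat_dist D (pmf_of_set UNIV) \<le> 1/2 * sqrt (real CARD('f) * 2 powr (-m))"
    unfolding D_def using assms(2)
    by (intro leftover_hash_lemma_affine pmf_map_le_of_min_entropy)
  moreover have "stat_dist (map_pmf split_output D) (pair_pmf (uniform_bits l) B)
                 \<le> stat_dist D (pmf_of_set UNIV)"
    unfolding B_def split_output_uniform[symmetric] by (intro stat_dist_map_le) auto
  moreover have "stat_dist (map_pmf split_output D)
                   (pair_pmf (uniform_bits l) (map_pmf snd (map_pmf split_output D)))
                 \<le> 2 * stat_dist (map_pmf split_output D) (pair_pmf (uniform_bits l) B)"
    using fin_B by (intro stat_dist_pair_marginal_le) (auto simp: set_pmf_uniform_bits finite_bool_lists)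
  ultimately show ?thesis
    unfolding gen_W by linarith
qed

definition forgeries :: "bool list \<Rightarrow> 'f \<times> bool list \<Rightarrow> ('f \<times> bool list) set" where
  "forgeries w P = {P'. P' \<noteq> P \<and> Rep w P' \<noteq> None}"

lemma card_forgeable_le:
  assumes "P' \<noteq> snd (split_output (i, y))"
  shows "card {w. length w = n \<and> affine_hash i (halves w) = y \<and> Rep w P' \<noteq> None} \<le> 2 ^ l"
    (is "card ?T \<le> _")
proof -
  obtain i' s where P': "P' = (i', s)" by fastforce
  show ?thesis
  proof (cases "i' = i")
    case True
    have empty: "?T = {}"
    proof (intro equals0I)
      fix w assume "w \<in> ?T"
      then show False
        using assms True by (simp add: P' split_output_def rep_ex_eq_None_iff)
    qed
    show ?thesis unfolding empty by simp
  next
    case False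
    let ?tag = "\<lambda>w. enc (affine_hash i' (halves w))"
    have "inj_on ?tag ?T"
    proof (rule inj_onI)
      fix w w' assume "w \<in> ?T" "w' \<in> ?T" "?tag w = ?tag w'"
      then have "halves w = halves w'"
        using False by (intro affine_hash_eq_imp_eq[of i i']) auto
      then show "w = w'"
        using inj_on_halves \<open>w \<in> ?T\<close> \<open>w' \<in> ?T\<close> by (auto dest: inj_onD)
    qed
    then have "card ?T = card (?tag ` ?T)" by (simp add: card_image)
    also have "\<dots> \<le> card {xs :: bool list. length xs = K \<and> take V xs = s}"
      by (intro card_mono finite_subset[OF _ finite_bool_lists[of K]])
        (auto simp: P' rep_ex_eq_None_iff)
    also have "\<dots> \<le> 2 ^ l"
      using card_bool_lists_prefix_le[of K V s] l_le by simp
    finally show ?thesis .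
  qed
qed

lemma weight_forgeable_le:
  assumes "set_pmf W \<subseteq> {w. length w = n}" and "min_entropy W \<ge> m"
  shows "(\<Sum>w\<in>{w\<in>set_pmf W. affine_hash i (halves w) = y}.
            pmf W w * indicator (forgeries w (snd (split_output (i, y)))) P') \<le> 2 powr (real l - m)"
proof (cases "P' = snd (split_output (i, y))")
  case True
  then show ?thesis by (simp add: forgeries_def)
next
  case False
  let ?T = "{w. length w = n \<and> affine_hash i (halves w) = y \<and> Rep w P' \<noteq> None}"
  have fin: "finite (set_pmf W)" using assms(1) by (rule finite_set_pmf_bool_lists)
  have "(\<Sum>w\<in>{w\<in>set_pmf W. affine_hash i (halves w) = y}.
            pmf W w * indicator (forgeries w (snd (split_output (i, y)))) P')
        = (\<Sum>w\<in>set_pmf W \<inter> ?T. pmf W w)"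
    using fin False assms(1)
    by (auto simp: forgeries_def indicator_def sum.If_cases Int_def intro!: sum.cong)
  also have "\<dots> \<le> (\<Sum>w\<in>set_pmf W \<inter> ?T. 2 powr (-m))"
    using assms(2) by (intro sum_mono pmf_le_of_min_entropy)
  also have "\<dots> \<le> 2 ^ l * 2 powr (-m)"
    using card_mono[OF _ Int_lower2, of ?T "set_pmf W"] card_forgeable_le[OF False]
      finite_subset[OF _ finite_bool_lists[of n]]
    by (simp add: mult_right_mono)
  also have "\<dots> = 2 powr (real l - m)"
    by (simp add: powr_diff powr_realpow powr_minus divide_inverse)
  finally show ?thesis .
qed

lemma prob_forgery_eq:
  "measure_pmf.prob (bind_pmf (Gen w) (\<lambda>(R, P). map_pmf (\<lambda>P'. (w, P, P')) (A R P)))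
     {(w, P, P'). P' \<noteq> P \<and> Rep w P' \<noteq> None}
   = (\<Sum>i\<in>UNIV. measure_pmf.prob (case_prod A (split_output (i, affine_hash i (halves w))))
        (forgeries w (snd (split_output (i, affine_hash i (halves w)))))) / real CARD('f)"
proof -
  let ?out = "\<lambda>i. split_output (i, affine_hash i (halves w))"
  have "bind_pmf (Gen w) (\<lambda>(R, P). map_pmf (\<lambda>P'. (w, P, P')) (A R P))
        = bind_pmf (pmf_of_set UNIV) (\<lambda>i. map_pmf (\<lambda>P'. (w, snd (?out i), P')) (case_prod A (?out i)))"
    by (simp add: gen_ex_eq affine_hash_pmf_def bind_map_pmf case_prod_beta)
  then show ?thesis
    by (simp add: measure_bind_pmf_finite[of UNIV] measure_map_pmf vimage_def forgeries_def
        sum_divide_distrib)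
qed

lemma sum_prob_forgery_le:
  assumes "set_pmf W \<subseteq> {w. length w = n}" and "min_entropy W \<ge> m"
  shows "(\<Sum>w\<in>set_pmf W. pmf W w *
            measure_pmf.prob (case_prod A (split_output (i, affine_hash i (halves w))))
              (forgeries w (snd (split_output (i, affine_hash i (halves w))))))
         \<le> real CARD('f) * 2 powr (real l - m)"
proof -
  have fin: "finite (set_pmf W)" using assms(1) by (rule finite_set_pmf_bool_lists)
  have "(\<Sum>w\<in>set_pmf W. pmf W w *
            measure_pmf.prob (case_prod A (split_output (i, affine_hash i (halves w))))
              (forgeries w (snd (split_output (i, affine_hash i (halves w))))))
        = (\<Sum>y\<in>UNIV. \<Sum>w\<in>{w\<in>set_pmf W. affine_hash i (halves w) = y}.
             pmf W w * measure_pmf.prob (case_prod A (split_output (i, y)))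
               (forgeries w (snd (split_output (i, y)))))"
    using fin by (subst sum.group[symmetric, of _ UNIV "\<lambda>w. affine_hash i (halves w)"])
      (auto intro!: sum.cong)
  also have "\<dots> \<le> (\<Sum>y\<in>(UNIV :: 'f set). 2 powr (real l - m))"
    using fin by (intro sum_mono sum_weighted_prob_le weight_forgeable_le assms) auto
  also have "\<dots> = real CARD('f) * 2 powr (real l - m)" by simp
  finally show ?thesis .
qed

text \<open>The adversary's view depends on w only through the seed i and the hash value y; averaging
  first over the w with the same y lets the counting bound absorb the adversary's choice.\<close>
lemma robust_prob_le:
  assumes "set_pmf W \<subseteq> {w. length w = n}" and "min_entropy W \<ge> m"
  shows "measure_pmf.prob
           (bind_pmf W (\<lambda>w. bind_pmf (Gen w) (\<lambda>(R, P). map_pmf (\<lambda>P'. (w, P, P')) (A R P))))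
           {(w, P, P'). P' \<noteq> P \<and> Rep w P' \<noteq> None}
         \<le> real CARD('f) * 2 powr (real l - m)"
proof -
  define q where "q = real CARD('f)"
  define prob where "prob w i = measure_pmf.prob (case_prod A (split_output (i, affine_hash i (halves w))))
      (forgeries w (snd (split_output (i, affine_hash i (halves w)))))" for w i
  have fin: "finite (set_pmf W)" using assms(1) by (rule finite_set_pmf_bool_lists)
  have "measure_pmf.prob
          (bind_pmf W (\<lambda>w. bind_pmf (Gen w) (\<lambda>(R, P). map_pmf (\<lambda>P'. (w, P, P')) (A R P))))
          {(w, P, P'). P' \<noteq> P \<and> Rep w P' \<noteq> None}
        = (\<Sum>w\<in>set_pmf W. pmf W w * ((\<Sum>i\<in>UNIV. prob w i) / q))"
    using fin
    by (simp add: measure_bind_pmf_finite[of "set_pmf W"] prob_forgery_eq prob_def q_def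
        del: not_None_eq)
  also have "\<dots> = (\<Sum>i\<in>UNIV. \<Sum>w\<in>set_pmf W. pmf W w * prob w i) / q"
    by (simp add: sum_distrib_left sum_divide_distrib sum.swap[of _ "set_pmf W"])
  also have "\<dots> \<le> (\<Sum>i\<in>(UNIV :: 'f set). q * 2 powr (real l - m)) / q"
    unfolding prob_def q_def using assms by (intro divide_right_mono sum_mono sum_prob_forgery_le) auto
  also have "\<dots> = q * 2 powr (real l - m)" by (simp add: q_def)
  finally show ?thesis by (simp add: q_def)
qed

end

lemma sqrt_two_powr_le_of_log:
  fixes k m eps :: real
  assumes "eps > 0" "m \<ge> k + 2 * log 2 (1 / eps)"
  shows "sqrt (2 powr k * 2 powr (-m)) \<le> eps"
proof -
  have "log 2 (1 / eps) = - log 2 eps" using assms(1) by (simp add: log_divide)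
  then have "2 powr k * 2 powr (-m) \<le> 2 powr (log 2 eps + log 2 eps)"
    using assms(2) by (simp flip: powr_add)
  also have "\<dots> = eps ^ 2" using assms(1) by (simp only: powr_add) (simp add: power2_eq_square)
  finally show ?thesis using assms(1) by (simp add: real_sqrt_le_iff real_le_lsqrt)
qed

lemma two_powr_le_of_log:
  fixes k l m delta :: real
  assumes "delta > 0" "l \<le> m - k - log 2 (1 / delta)"
  shows "2 powr k * 2 powr (l - m) \<le> delta"
proof -
  have "2 powr k * 2 powr (l - m) = 2 powr (k + (l - m))" by (simp add: powr_add)
  also have "\<dots> \<le> 2 powr (log 2 delta)" using assms by (intro powr_mono) (auto simp: log_divide)
  also have "\<dots> = delta" using assms(1) by simp
  finally show ?thesis .
qed

theorem theorem1:
  fixes enc :: "'f::{field,finite} \<Rightarrow> bool list"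
    and n l :: nat and m eps delta :: real
  assumes "even n"
    and "bij_betw enc UNIV {xs. length xs = n div 2}"
    and "\<And>x y. enc (x + y) = map2 (\<lambda>p q. p \<noteq> q) (enc x) (enc y)"
    and "l \<le> n div 2"
    and "eps > 0" and "delta > 0"
    and "real l \<le> m - real n / 2 - log 2 (1 / delta)"
    and "m \<ge> real n / 2 + 2 * log 2 (1 / eps)"
  shows "fuzzy_extractor n m l 0 eps
           (gen_ex enc (n div 2) (n div 2 - l)) (rep_ex enc (n div 2) (n div 2 - l))
       \<and> post_app_robust n m delta
           (gen_ex enc (n div 2) (n div 2 - l)) (rep_ex enc (n div 2) (n div 2 - l))"
proof -
  interpret affine_extractor enc n l
    using assms(1,2,4) by unfold_locales
  have card: "real CARD('f) = 2 powr (real n / 2)"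
    using assms(1) by (auto simp: card_field powr_realpow elim!: evenE)
  have eps: "sqrt (real CARD('f) * 2 powr (-m)) \<le> eps"
    unfolding card using assms(5,8) by (rule sqrt_two_powr_le_of_log)
  have delta: "real CARD('f) * 2 powr (real l - m) \<le> delta"
    unfolding card using assms(6,7) by (rule two_powr_le_of_log)
  show ?thesis
    unfolding fuzzy_extractor_def post_app_robust_def
  proof (intro conjI allI impI, goal_cases)
    case (1 w R P)
    then show ?case by (simp add: gen_ex_correct)
  next
    case (2 w R P w')
    then show ?case using gen_ex_correct(2) hamming_dist_zero_imp_eq[of w w'] by simp
  next
    case (3 W)
    then show ?case using extractor_stat_dist_le[of W m] eps by linarith
  next
    case (4 W A)
    then show ?case using robust_prob_le[of W m A] delta by linarith
  qed
qed

end
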